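(* Let $n$ be a positive integer, $k$ an integer with $0\le k\le n$, and $0<\phi<\infty$. For $\ell = 0,\dots,n-k$ set $H_\ell = \phi^\ell\, S(n-\ell,k,\phi)/S(n,k,\phi)$. Then the moment generating function $m(t)=\mathbb{E}(e^{tR})$ of a random variable $R\sim\mathrm{Spillage}(n,k,\phi)$ satisfies, for all real $t$, $$m(t) = e^{t(n-k)}\sum_{\ell=0}^{n-k}\binom{n}{\ell}(e^{-t}-1)^\ell\, H_\ell.$$
   Context: $S(j,k)$ denotes the (central) Stirling numbers of the second kind. The noncentral Stirling numbers of the second kind are defined by $S(n,k,\phi) = \sum_{r=0}^{n-k}\binom{n}{k+r}\phi^{n-k-r}S(k+r,k)$ (zero if $n<k$). The spillage distribution $\mathrm{Spillage}(n,k,\phi)$ (for $0<\phi<\infty$) is the distribution on $\{0,\dots,n-k\}$ with mass function $\mathrm{Spillage}(r\mid n,k,\phi) = \binom{n}{k+r}\phi^{n-k-r}S(k+r,k)/S(n,k,\phi)$. *)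

theory Defs
  imports "HOL-Probability.Probability" "HOL-Combinatorics.Stirling"
begin

definition nc_stirling :: "nat \<Rightarrow> nat \<Rightarrow> real \<Rightarrow> real" where
  "nc_stirling n k \<phi> =
     (if n < k then 0
      else (\<Sum>r=0..n-k. real (n choose (k+r)) * \<phi> ^ (n-k-r) * real (Stirling (k+r) k)))"

definition spillage_mass :: "nat \<Rightarrow> nat \<Rightarrow> real \<Rightarrow> nat \<Rightarrow> real" where
  "spillage_mass n k \<phi> r =
     (if r \<le> n - k then real (n choose (k+r)) * \<phi> ^ (n-k-r) * real (Stirling (k+r) k)
                         / nc_stirling n k \<phi>
      else 0)"

text \<open>The spillage distribution as a pmf on nat (meaningful for 0 < phi, k <= n).\<close>
definition spillage_pmf :: "nat \<Rightarrow> nat \<Rightarrow> real \<Rightarrow> nat pmf" where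
  "spillage_pmf n k \<phi> = embed_pmf (spillage_mass n k \<phi>)"

end

theory Submission
  imports Defs
begin

text \<open>Writing \<open>exp (t r) = exp (t (n - k)) * exp (-t) ^ (n - k - r)\<close> moves the factor
  \<open>exp (-t)\<close> into the parameter: the unnormalised moment generating function of
  \<open>Spillage(n,k,\<phi>)\<close> is \<open>exp (t (n - k)) * S(n,k,\<phi> exp (-t))\<close>.  The formula then follows
  from the binomial shift \<open>S(n,k,a+b) = (\<Sum>l\<le>n. (n choose l) b^l S(n-l,k,a))\<close> with \<open>a = \<phi>\<close>
  and \<open>b = \<phi> (exp (-t) - 1)\<close>, which is the binomial theorem for \<open>(a + b) ^ (n - j)\<close> plus the
  symmetry \<open>(n choose l) (n-l choose j) = (n choose j) (n-j choose l)\<close>.\<close>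

lemma choose_mult_commute:
  "(n choose l) * ((n - l) choose j) = (n choose j) * ((n - j) choose l)"
proof (cases "l + j \<le> n")
  case True
  have "(n choose l) * ((n - l) choose j) = (n choose (l + j)) * ((l + j) choose l)"
    using choose_mult[of l "l + j" n] True by simp
  also have "\<dots> = (n choose (l + j)) * ((l + j) choose j)"
    using binomial_symmetric[of l "l + j"] by simp
  also have "\<dots> = (n choose j) * ((n - j) choose l)"
    using choose_mult[of j "l + j" n] True by simp
  finally show ?thesis .
next
  case False
  then have "n < l \<or> n - l < j" and "n < j \<or> n - j < l"
    by auto
  then show ?thesis by (auto simp: binomial_eq_0)
qed

lemma sum_choose_atMost_extend:
  fixes f :: "nat \<Rightarrow> 'a :: semiring_1"
  assumes "m \<le> n"
  shows "(\<Sum>i\<le>m. of_nat (m choose i) * f i) = (\<Sum>i\<le>n. of_nat (m choose i) * f i)"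
proof (rule sum.mono_neutral_left)
  show "\<forall>i\<in>{..n} - {..m}. of_nat (m choose i) * f i = 0"
    by (simp add: binomial_eq_0)
qed (use assms in auto)

lemma nc_stirling_eq_sum_atMost:
  "nc_stirling n k \<phi> = (\<Sum>j\<le>n. real (n choose j) * \<phi> ^ (n - j) * real (Stirling j k))"
proof (cases "k \<le> n")
  case True
  let ?f = "\<lambda>j. real (n choose j) * \<phi> ^ (n - j) * real (Stirling j k)"
  have "(\<Sum>j\<le>n. ?f j) = (\<Sum>j=k..n. ?f j)"
    by (rule sum.mono_neutral_right) auto
  also have "\<dots> = (\<Sum>r=0..n-k. ?f (k + r))"
    using sum.shift_bounds_cl_nat_ivl[of ?f 0 k "n - k"] True by (simp add: add.commute)
  finally show ?thesis
    using True by (simp add: nc_stirling_def)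
next
  case False
  then show ?thesis by (simp add: nc_stirling_def)
qed

lemma nc_stirling_add:
  "nc_stirling n k (a + b) = (\<Sum>l\<le>n. real (n choose l) * b ^ l * nc_stirling (n - l) k a)"
proof -
  define F where "F j l = real ((n choose j) * ((n - j) choose l))
                            * b ^ l * a ^ (n - j - l) * real (Stirling j k)" for j l
  have binomial_extended:
    "(a + b) ^ (n - j) = (\<Sum>l\<le>n. real ((n - j) choose l) * (b ^ l * a ^ (n - j - l)))" for j
    using binomial_ring[of b a "n - j"] sum_choose_atMost_extend[of "n - j" n]
    by (simp add: add.commute mult.assoc)
  have nc_stirling_extended:
    "nc_stirling (n - l) k a
       = (\<Sum>j\<le>n. real ((n - l) choose j) * (a ^ (n - l - j) * real (Stirling j k)))" for l
    using sum_choose_atMost_extend[of "n - l" n]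
    by (simp add: nc_stirling_eq_sum_atMost mult.assoc)
  have F_swap: "F j l = real (n choose l) * b ^ l
                        * (real ((n - l) choose j) * (a ^ (n - l - j) * real (Stirling j k)))" for j l
    unfolding F_def choose_mult_commute[of n j l] by (simp add: add.commute)
  have "nc_stirling n k (a + b) = (\<Sum>j\<le>n. \<Sum>l\<le>n. F j l)"
    by (simp add: nc_stirling_eq_sum_atMost binomial_extended F_def
        sum_distrib_left sum_distrib_right mult_ac)
  also have "\<dots> = (\<Sum>l\<le>n. \<Sum>j\<le>n. F j l)"
    by (rule sum.swap)
  also have "\<dots> = (\<Sum>l\<le>n. real (n choose l) * b ^ l * nc_stirling (n - l) k a)"
    by (simp add: nc_stirling_extended F_swap sum_distrib_left)
  finally show ?thesis .
qed

lemma nc_stirling_pos: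
  assumes "k \<le> n" and "\<phi> > 0"
  shows "nc_stirling n k \<phi> > 0"
proof -
  have "(\<Sum>r=0..n-k. real (n choose (k + r)) * \<phi> ^ (n - k - r) * real (Stirling (k + r) k)) > 0"
    using assms by (intro sum_pos2[where i = 0]) auto
  then show ?thesis
    using assms by (simp add: nc_stirling_def)
qed

lemma pmf_spillage_pmf:
  assumes "k \<le> n" and "\<phi> > 0"
  shows "pmf (spillage_pmf n k \<phi>) r = spillage_mass n k \<phi> r"
proof -
  have nonneg: "spillage_mass n k \<phi> r \<ge> 0" for r
    using nc_stirling_pos[OF assms] assms by (simp add: spillage_mass_def)
  have "(\<Sum>r=0..n-k. spillage_mass n k \<phi> r) = 1"
    using nc_stirling_pos[OF assms] assms
    by (simp add: spillage_mass_def nc_stirling_def sum_divide_distrib[symmetric])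
  moreover have "(\<integral>\<^sup>+r. ennreal (spillage_mass n k \<phi> r) \<partial>count_space UNIV)
      = (\<Sum>r=0..n-k. ennreal (spillage_mass n k \<phi> r))"
    by (rule nn_integral_count_space') (auto simp: spillage_mass_def)
  ultimately have "(\<integral>\<^sup>+r. ennreal (spillage_mass n k \<phi> r) \<partial>count_space UNIV) = 1"
    by (simp add: sum_ennreal nonneg)
  then show ?thesis
    unfolding spillage_pmf_def by (rule pmf_embed_pmf[OF nonneg])
qed

lemma spillage_mgf:
  assumes "k \<le> n" and "\<phi> > 0"
  shows "measure_pmf.expectation (spillage_pmf n k \<phi>) (\<lambda>R. exp (t * real R))
       = exp (t * real (n - k)) * nc_stirling n k (\<phi> * exp (-t)) / nc_stirling n k \<phi>"
proof -
  let ?w = "\<lambda>r. real (n choose (k + r)) * real (Stirling (k + r) k)"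
  have exp_split: "exp (t * real r) = exp (t * real (n - k)) * exp (-t) ^ (n - k - r)"
    if "r \<le> n - k" for r
    using that assms(1) by (simp add: exp_of_nat_mult[symmetric] exp_add[symmetric] of_nat_diff
        algebra_simps)
  have "measure_pmf.expectation (spillage_pmf n k \<phi>) (\<lambda>R. exp (t * real R))
      = (\<Sum>r=0..n-k. spillage_mass n k \<phi> r * exp (t * real r))"
    by (subst integral_measure_pmf[of "{0..n-k}"])
       (auto simp: pmf_spillage_pmf assms set_pmf_eq spillage_mass_def split: if_splits)
  also have "\<dots> = (\<Sum>r=0..n-k. ?w r * \<phi> ^ (n - k - r) * exp (t * real r)) / nc_stirling n k \<phi>"
    by (simp add: spillage_mass_def sum_divide_distrib mult_ac)
  also have "(\<Sum>r=0..n-k. ?w r * \<phi> ^ (n - k - r) * exp (t * real r))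
      = exp (t * real (n - k)) * nc_stirling n k (\<phi> * exp (-t))"
    using assms(1)
    by (simp add: nc_stirling_def exp_split sum_distrib_left power_mult_distrib mult_ac)
  finally show ?thesis by simp
qed

theorem lemma2:
  fixes n k :: nat and \<phi> t :: real
  assumes "n > 0" and "k \<le> n" and "\<phi> > 0"
  shows "measure_pmf.expectation (spillage_pmf n k \<phi>) (\<lambda>R. exp (t * real R))
       = exp (t * real (n - k)) *
         (\<Sum>l=0..n-k. real (n choose l) * (exp (-t) - 1) ^ l *
            (\<phi> ^ l * nc_stirling (n - l) k \<phi> / nc_stirling n k \<phi>))"
proof -
  have "nc_stirling n k (\<phi> * exp (-t)) = nc_stirling n k (\<phi> + \<phi> * (exp (-t) - 1))"
    by (simp add: algebra_simps)
  also have "\<dots> = (\<Sum>l\<le>n. real (n choose l) * (exp (-t) - 1) ^ l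
                                 * (\<phi> ^ l * nc_stirling (n - l) k \<phi>))"
    by (simp add: nc_stirling_add power_mult_distrib mult_ac)
  also have "\<dots> = (\<Sum>l=0..n-k. real (n choose l) * (exp (-t) - 1) ^ l
                                 * (\<phi> ^ l * nc_stirling (n - l) k \<phi>))"
    by (rule sum.mono_neutral_right) (auto simp: nc_stirling_def)
  finally show ?thesis
    using spillage_mgf[OF assms(2,3)] by (simp add: sum_divide_distrib[symmetric])
qed

end
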